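(* Let $w\in[k]^n$ and let $m$ be a positive integer. If $\mathrm{LT}(w)\geq m$, then $w$ contains monotone twins of length $m$.
   Context: $[k]=\{1,\dots,k\}$; $w[i]$ is the $i$-th letter of $w$. Two subsequences of $w$ are twins if they are equal as words and use disjoint sets of positions of $w$; $\mathrm{LT}(w)$ is the maximum length of twins in $w$. Twins $w_1,w_2$ of length $m$, occupying positions $p_1<\dots<p_m$ and $p_1'<\dots<p_m'$ of $w$ respectively, are monotone if $p_i<p_i'$ for all $i$ (the $i$-th letter of $w_1$ precedes the $i$-th letter of $w_2$ in $w$). *)

theory Defs
  imports Main
begin

text \<open>Words over [k] = {1..k} are lists of naturals; positions are 0-based indices.
  A subsequence is given by a strictly increasing list of positions.\<close>

definition words :: "nat \<Rightarrow> nat \<Rightarrow> nat list set" where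
  "words k n = {w. length w = n \<and> set w \<subseteq> {1..k}}"

definition is_subseq_pos :: "'a list \<Rightarrow> nat list \<Rightarrow> bool" where
  "is_subseq_pos w P \<longleftrightarrow> sorted_wrt (<) P \<and> (\<forall>p\<in>set P. p < length w)"

definition twins :: "'a list \<Rightarrow> nat list \<Rightarrow> nat list \<Rightarrow> bool" where
  "twins w P Q \<longleftrightarrow> is_subseq_pos w P \<and> is_subseq_pos w Q \<and>
     set P \<inter> set Q = {} \<and> map ((!) w) P = map ((!) w) Q"

definition LT :: "'a list \<Rightarrow> nat" where
  "LT w = Max {length P | P Q. twins w P Q}"

definition monotone_twins :: "'a list \<Rightarrow> nat list \<Rightarrow> nat list \<Rightarrow> bool" where
  "monotone_twins w P Q \<longleftrightarrow> twins w P Q \<and> (\<forall>i < length P. P ! i < Q ! i)"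

end

theory Submission
  imports Defs
begin

text \<open>Take twins of maximal length \<open>LT w\<close> and cut both to their first \<open>m\<close> positions. Replacing
  the \<open>i\<close>-th positions \<open>p\<^sub>i, q\<^sub>i\<close> by \<open>min p\<^sub>i q\<^sub>i\<close> and \<open>max p\<^sub>i q\<^sub>i\<close> keeps both position lists
  strictly increasing and carries the same letters; the new lists are still disjoint since every
  position is still taken from one of the original, disjoint and repetition-free, position lists.\<close>

lemma twins_length_le:
  assumes "twins w P Q"
  shows "length P \<le> length w"
proof -
  have "distinct P" "set P \<subseteq> {0..<length w}"
    using assms by (auto simp: twins_def is_subseq_pos_def strict_sorted_iff)
  then show ?thesis
    using card_mono[of "{0..<length w}" "set P"] by (simp add: distinct_card)
qed

lemma twins_length_LT: "\<exists>P Q. twins w P Q \<and> length P = LT w"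
proof -
  let ?S = "{length P | P Q. twins w P Q}"
  have "finite ?S"
    by (rule finite_subset[of _ "{0..length w}"]) (use twins_length_le in fastforce)+
  moreover have "twins w [] []"
    by (simp add: twins_def is_subseq_pos_def)
  then have "?S \<noteq> {}" by blast
  ultimately have "LT w \<in> ?S"
    unfolding LT_def by (rule Max_in)
  then show ?thesis by auto
qed

lemma twins_length_eq: "twins w P Q \<Longrightarrow> length Q = length P"
  unfolding twins_def by (metis length_map)

lemma twins_take:
  assumes "twins w P Q"
  shows "twins w (take m P) (take m Q)"
proof -
  have "set (take m P) \<inter> set (take m Q) = {}"
    using assms set_take_subset unfolding twins_def by fast
  with assms show ?thesis
    by (auto simp: twins_def is_subseq_pos_def sorted_wrt_take take_map[symmetric]
        dest: in_set_takeD)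
qed

lemma sorted_wrt_less_map2_min:
  fixes xs ys :: "'a::linorder list"
  assumes "sorted_wrt (<) xs" "sorted_wrt (<) ys" "length xs = length ys"
  shows "sorted_wrt (<) (map2 min xs ys)"
  unfolding sorted_wrt_iff_nth_less
proof (intro allI impI)
  fix i j assume "i < j" "j < length (map2 min xs ys)"
  with assms have "xs ! i < xs ! j" "ys ! i < ys ! j"
    by (auto simp: sorted_wrt_iff_nth_less)
  with \<open>i < j\<close> \<open>j < _\<close> show "map2 min xs ys ! i < map2 min xs ys ! j"
    by (simp add: min_less_iff_disj)
qed

lemma sorted_wrt_less_map2_max:
  fixes xs ys :: "'a::linorder list"
  assumes "sorted_wrt (<) xs" "sorted_wrt (<) ys" "length xs = length ys"
  shows "sorted_wrt (<) (map2 max xs ys)"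
  unfolding sorted_wrt_iff_nth_less
proof (intro allI impI)
  fix i j assume "i < j" "j < length (map2 max xs ys)"
  with assms have "xs ! i < xs ! j" "ys ! i < ys ! j"
    by (auto simp: sorted_wrt_iff_nth_less)
  with \<open>i < j\<close> \<open>j < _\<close> show "map2 max xs ys ! i < map2 max xs ys ! j"
    by (auto simp: max_def)
qed

lemma map2_min_max_disjoint:
  fixes xs ys :: "'a::linorder list"
  assumes "distinct xs" "distinct ys" "set xs \<inter> set ys = {}" "length xs = length ys"
  shows "set (map2 min xs ys) \<inter> set (map2 max xs ys) = {}"
proof -
  have "min (xs ! i) (ys ! i) \<noteq> max (xs ! j) (ys ! j)"
    if "i < length xs" "j < length xs" for i j
  proof (cases "i = j")
    case True
    from assms(3,4) that(1) have "xs ! i \<noteq> ys ! i"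
      by (metis disjoint_iff nth_mem)
    with True show ?thesis by (auto simp: min_def max_def)
  next
    case False
    with assms that have "xs ! i \<noteq> xs ! j" "ys ! i \<noteq> ys ! j"
      by (simp_all add: nth_eq_iff_index_eq)
    moreover from assms(3,4) that have "xs ! i \<noteq> ys ! j" "ys ! i \<noteq> xs ! j"
      by (metis disjoint_iff nth_mem)+
    ultimately show ?thesis by (auto simp: min_def max_def)
  qed
  with assms(4) show ?thesis
    by (auto simp: in_set_conv_nth)
qed

lemma monotone_twins_min_max:
  assumes "twins w P Q"
  shows "monotone_twins w (map2 min P Q) (map2 max P Q)"
proof -
  have len: "length Q = length P" using assms by (rule twins_length_eq)
  have sorted: "sorted_wrt (<) P" "sorted_wrt (<) Q"
    using assms by (simp_all add: twins_def is_subseq_pos_def)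
  have disjoint: "set P \<inter> set Q = {}"
    using assms by (simp add: twins_def)
  then have pointwise_distinct: "\<forall>i < length P. P ! i \<noteq> Q ! i"
    using len by (metis disjoint_iff nth_mem)
  have same_letter: "w ! (P ! i) = w ! (Q ! i)" if "i < length P" for i
    using assms len that unfolding twins_def by (metis nth_map)
  have "\<forall>p \<in> set P \<union> set Q. p < length w"
    using assms by (auto simp: twins_def is_subseq_pos_def)
  moreover have "set (map2 min P Q) \<subseteq> set P \<union> set Q"
    and "set (map2 max P Q) \<subseteq> set P \<union> set Q"
    by (auto simp: min_def max_def set_zip)
  ultimately have "is_subseq_pos w (map2 min P Q)" "is_subseq_pos w (map2 max P Q)"
    using sorted_wrt_less_map2_min[OF sorted len[symmetric]]
      sorted_wrt_less_map2_max[OF sorted len[symmetric]]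
    by (auto simp: is_subseq_pos_def)
  moreover have "set (map2 min P Q) \<inter> set (map2 max P Q) = {}"
    using sorted disjoint len
    by (intro map2_min_max_disjoint) (simp_all add: strict_sorted_iff)
  moreover have "map ((!) w) (map2 min P Q) = map ((!) w) (map2 max P Q)"
    using len same_letter by (auto simp: list_eq_iff_nth_eq min_def max_def)
  moreover have "\<forall>i < length (map2 min P Q). map2 min P Q ! i < map2 max P Q ! i"
    using pointwise_distinct len by (auto simp: min_def max_def)
  ultimately show ?thesis
    by (simp add: monotone_twins_def twins_def)
qed

theorem lemma17:
  fixes w :: "nat list" and k n m :: nat
  assumes "w \<in> words k n" and "m > 0" and "LT w \<ge> m"
  shows "\<exists>P Q. monotone_twins w P Q \<and> length P = m"
proof -
  obtain P Q where "twins w P Q" and "length P = LT w"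
    using twins_length_LT by blast
  then have "twins w (take m P) (take m Q)" and "length (take m P) = m"
    using assms(3) twins_take by auto
  then show ?thesis
    using monotone_twins_min_max twins_length_eq by fastforce
qed

end
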